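(* Let $n\ge3$ and let $A_1,\dots,A_n$ be events in a probability space. Then \[ \Pr\Big(\bigcup_{i=1}^n A_i\Big) \ge \frac{1}{n-2}\Big(\sum_{i=1}^n\Pr(A_i) - \frac{2n-3}{\binom n2}\sum_{1\le i<j\le n}\Pr(A_i\cap A_j) + \frac{3}{\binom n2}\sum_{1\le i<j<k\le n}\Pr(A_i\cap A_j\cap A_k)\Big). \] *)

theory Defs
  imports "HOL-Probability.Probability"
begin

end

theory Submission
  imports Defs
begin

(* Write bonferroni3 n s1 s2 s3 for the affine combination
   of the single, pair and triple sums on the right-hand side.  Fix a sample point x
   and let m be the number of events containing x.  The indicator sums over single
   events, increasing pairs and increasing triples at x are the elementary symmetric
   sums of 0/1 values, i.e. m, m(m-1)/2 and m(m-1)(m-2)/6.  For these values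
   bonferroni3 is a cubic in m which vanishes at m = 0 and is at most 1 for
   1 <= m <= n, so it is bounded by the indicator of the union at x.  Since
   bonferroni3 is affine, integrating this pointwise bound turns the indicator sums
   into sums of probabilities, which is the theorem. *)

definition increasing_pairs :: "nat \<Rightarrow> (nat \<times> nat) set" where
  "increasing_pairs n = {(i, j). 1 \<le> i \<and> i < j \<and> j \<le> n}"

definition increasing_triples :: "nat \<Rightarrow> (nat \<times> nat \<times> nat) set" where
  "increasing_triples n = {(i, j, k). 1 \<le> i \<and> i < j \<and> j < k \<and> k \<le> n}"

definition bonferroni3 :: "nat \<Rightarrow> real \<Rightarrow> real \<Rightarrow> real \<Rightarrow> real" where
  "bonferroni3 n s1 s2 s3 = (1 / (real n - 2)) *
     (s1 - ((2 * real n - 3) / real (n choose 2)) * s2 + (3 / real (n choose 2)) * s3)"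

lemma sum_increasing_pairs:
  "(\<Sum>(i, j)\<in>increasing_pairs n. g i j)
     = (\<Sum>j=1..n. \<Sum>i=1..<j. (g i j :: 'b::comm_monoid_add))"
proof -
  have "(\<Sum>j=1..n. \<Sum>i=1..<j. g i j) = (\<Sum>(j, i)\<in>Sigma {1..n} (\<lambda>j. {1..<j}). g i j)"
    by (subst sum.Sigma) auto
  also have "\<dots> = (\<Sum>(i, j)\<in>increasing_pairs n. g i j)"
    by (rule sum.reindex_bij_witness[of _ "\<lambda>(i, j). (j, i)" "\<lambda>(j, i). (i, j)"])
       (auto simp: increasing_pairs_def)
  finally show ?thesis by simp
qed

lemma sum_increasing_triples:
  "(\<Sum>(i, j, k)\<in>increasing_triples n. g i j k)
     = (\<Sum>k=1..n. \<Sum>j=1..<k. \<Sum>i=1..<j. (g i j k :: 'b::comm_monoid_add))"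
proof -
  have "(\<Sum>k=1..n. \<Sum>j=1..<k. \<Sum>i=1..<j. g i j k)
      = (\<Sum>k=1..n. \<Sum>(j, i)\<in>Sigma {1..<k} (\<lambda>j. {1..<j}). g i j k)"
    by (intro sum.cong refl, subst sum.Sigma) auto
  also have "\<dots> = (\<Sum>(k, j, i)\<in>Sigma {1..n} (\<lambda>k. Sigma {1..<k} (\<lambda>j. {1..<j})). g i j k)"
    by (subst sum.Sigma) auto
  also have "\<dots> = (\<Sum>(i, j, k)\<in>increasing_triples n. g i j k)"
    by (rule sum.reindex_bij_witness[of _ "\<lambda>(i, j, k). (k, j, i)" "\<lambda>(k, j, i). (i, j, k)"])
       (auto simp: increasing_triples_def)
  finally show ?thesis by simp
qed

text \<open>Both follow by induction on n from the
  recurrences e2(n+1) = e2(n) + S(n) a(n+1) and e3(n+1) = e3(n) + e2(n) a(n+1).\<close>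

lemma second_symmetric_sum_idempotent:
  fixes a :: "nat \<Rightarrow> 'b::comm_ring_1"
  assumes idem: "\<And>i. a i * a i = a i"
  shows "2 * (\<Sum>j=1..n. \<Sum>i=1..<j. a i * a j)
           = (\<Sum>i=1..n. a i) * ((\<Sum>i=1..n. a i) - 1)"
proof (induction n)
  case 0
  show ?case by simp
next
  case (Suc n)
  have "(\<Sum>j=1..Suc n. \<Sum>i=1..<j. a i * a j)
      = (\<Sum>j=1..n. \<Sum>i=1..<j. a i * a j) + (\<Sum>i=1..n. a i) * a (Suc n)"
    by (simp add: atLeastLessThanSuc_atLeastAtMost sum_distrib_right)
  with Suc.IH idem[of "Suc n"] show ?case
    by (simp add: algebra_simps)
qed

lemma third_symmetric_sum_idempotent:
  fixes a :: "nat \<Rightarrow> 'b::comm_ring_1"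
  assumes idem: "\<And>i. a i * a i = a i"
  shows "6 * (\<Sum>k=1..n. \<Sum>j=1..<k. \<Sum>i=1..<j. a i * a j * a k)
           = (\<Sum>i=1..n. a i) * ((\<Sum>i=1..n. a i) - 1) * ((\<Sum>i=1..n. a i) - 2)"
proof (induction n)
  case 0
  show ?case by simp
next
  case (Suc n)
  define S where "S = (\<Sum>i=1..n. a i)"
  define e2 where "e2 = (\<Sum>j=1..n. \<Sum>i=1..<j. a i * a j)"
  define e3 where "e3 = (\<Sum>k=1..n. \<Sum>j=1..<k. \<Sum>i=1..<j. a i * a j * a k)"
  define c where "c = a (Suc n)"
  have IH: "S * (S - 1) * (S - 2) = 6 * e3"
    using Suc.IH by (simp add: S_def e3_def)
  have pairs: "S * (S - 1) = 2 * e2"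
    using second_symmetric_sum_idempotent[of a n, OF idem] by (simp add: S_def e2_def)
  have step: "(\<Sum>k=1..Suc n. \<Sum>j=1..<k. \<Sum>i=1..<j. a i * a j * a k) = e3 + e2 * c"
    by (simp add: e2_def e3_def c_def atLeastLessThanSuc_atLeastAtMost sum_distrib_right)
  have "(S + c) * (S + c - 1) * (S + c - 2)
      = S * (S - 1) * (S - 2) + c * (3 * S * S - 6 * S + 2) + (c * c) * (3 * S - 3) + (c * c) * c"
    by (simp add: algebra_simps)
  also have "\<dots> = S * (S - 1) * (S - 2) + 3 * c * (S * (S - 1))"
    using idem[of "Suc n"] by (simp add: c_def algebra_simps)
  also have "\<dots> = 6 * (e3 + e2 * c)"
    unfolding IH unfolding pairs by (simp add: algebra_simps)
  finally have "(S + c) * (S + c - 1) * (S + c - 2) = 6 * (e3 + e2 * c)" .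
  moreover have "(\<Sum>i=1..Suc n. a i) = S + c"
    by (simp add: S_def c_def)
  ultimately show ?case
    unfolding step by simp
qed

text \<open>The pointwise inequality multiplied by n(n-1): a point lying in m >= 1 of
  the n events contributes at most n - 2.  The defect equals
  n(n-1)(n-3) - (m-1)(n-m)(n-1-m), and the subtracted product is either 0
  (m = n-1 or m = n) or a product of three factors bounded by n-3, n-1 and n.\<close>

lemma cubic_count_bound:
  fixes m n :: nat
  assumes "1 \<le> m" "m \<le> n" "3 \<le> n"
  shows "real m * real n * (real n - 1) - (2 * real n - 3) * real m * (real m - 1)
           + real m * (real m - 1) * (real m - 2) \<le> (real n - 2) * real n * (real n - 1)"
proof -
  have defect: "(real n - 2) * real n * (real n - 1)
      - (real m * real n * (real n - 1) - (2 * real n - 3) * real m * (real m - 1)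
         + real m * (real m - 1) * (real m - 2))
      = real n * (real n - 1) * (real n - 3)
        - (real m - 1) * (real n - real m) * (real n - 1 - real m)"
    by (simp add: algebra_simps)
  have "(real m - 1) * (real n - real m) * (real n - 1 - real m)
          \<le> (real n - 3) * (real n - 1) * real n"
  proof (cases "m + 2 \<le> n")
    case True
    then show ?thesis
      using assms by (intro mult_mono) auto
  next
    case False
    then have "m = n \<or> m + 1 = n" using assms(2) by linarith
    then have "(real m - 1) * (real n - real m) * (real n - 1 - real m) = 0" by auto
    moreover have "0 \<le> (real n - 3) * (real n - 1) * real n" using assms(3) by simp
    ultimately show ?thesis by linarith
  qed
  then show ?thesis
    using defect by (simp add: algebra_simps)
qed

lemma real_choose_two: "real (n choose 2) = real n * (real n - 1) / 2"
proof (cases "n = 0")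
  case False
  have "even (n * (n - 1))" by (cases "even n") auto
  then have "real (n * (n - 1) div 2) = real (n * (n - 1)) / 2"
    by (simp add: real_of_nat_div)
  then show ?thesis using False by (simp add: choose_two of_nat_diff)
qed simp

lemma counting_bound:
  fixes S e2 e3 :: real and m n :: nat
  assumes "S = real m" "m \<le> n" "3 \<le> n"
    and e2: "2 * e2 = S * (S - 1)" and e3: "6 * e3 = S * (S - 1) * (S - 2)"
  shows "bonferroni3 n S e2 e3 \<le> (if m = 0 then 0 else 1)"
proof (cases "m = 0")
  case True
  then show ?thesis using assms by (simp add: bonferroni3_def)
next
  case False
  define D where "D = real n * (real n - 1)"
  define k2 where "k2 = (2 * real n - 3) / real (n choose 2)"
  define k3 where "k3 = 3 / real (n choose 2)"
  have D_pos: "D > 0" using assms(3) by (simp add: D_def)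
  have k2: "k2 * D = 2 * (2 * real n - 3)" and k3: "k3 * D = 6"
    using assms(3) by (simp_all add: k2_def k3_def real_choose_two D_def field_simps)
  have "(S - k2 * e2 + k3 * e3) * D = S * D - (k2 * D) * e2 + (k3 * D) * e3"
    by (simp add: algebra_simps)
  also have "\<dots> = S * D - (2 * real n - 3) * (2 * e2) + 6 * e3"
    unfolding k2 k3 by (simp add: algebra_simps)
  also have "\<dots> = real m * real n * (real n - 1) - (2 * real n - 3) * real m * (real m - 1)
                  + real m * (real m - 1) * (real m - 2)"
    unfolding e2 e3 D_def assms(1) by (simp add: algebra_simps)
  also have "\<dots> \<le> (real n - 2) * D"
    using cubic_count_bound[of m n] False assms by (simp add: D_def mult.assoc)
  finally have "S - k2 * e2 + k3 * e3 \<le> real n - 2"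
    using D_pos by (simp add: mult_le_cancel_right)
  then show ?thesis
    using False assms(3) by (simp add: bonferroni3_def k2_def k3_def divide_le_eq)
qed

lemma indicator_bonferroni_bound:
  fixes A :: "nat \<Rightarrow> 'a set" and n :: nat
  assumes "3 \<le> n"
  shows "bonferroni3 n (\<Sum>i\<in>{1..n}. indicator (A i) x)
           (\<Sum>(i, j)\<in>increasing_pairs n. indicator (A i \<inter> A j) x)
           (\<Sum>(i, j, k)\<in>increasing_triples n. indicator (A i \<inter> A j \<inter> A k) x)
         \<le> (indicator (\<Union>i\<in>{1..n}. A i) x :: real)"
proof -
  define a where "a i = (indicator (A i) x :: real)" for i
  define K where "K = {i \<in> {1..n}. x \<in> A i}"
  have idem: "a i * a i = a i" for i by (simp add: a_def indicator_def)
  have singles: "(\<Sum>i\<in>{1..n}. indicator (A i) x) = (\<Sum>i=1..n. a i)"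
    by (simp add: a_def)
  have pairs: "(\<Sum>(i, j)\<in>increasing_pairs n. indicator (A i \<inter> A j) x)
      = (\<Sum>j=1..n. \<Sum>i=1..<j. a i * a j)"
    unfolding sum_increasing_pairs by (simp add: a_def indicator_inter_arith)
  have triples: "(\<Sum>(i, j, k)\<in>increasing_triples n. indicator (A i \<inter> A j \<inter> A k) x)
      = (\<Sum>k=1..n. \<Sum>j=1..<k. \<Sum>i=1..<j. a i * a j * a k)"
    unfolding sum_increasing_triples by (simp add: a_def indicator_inter_arith)
  have count: "(\<Sum>i=1..n. a i) = real (card K)"
    by (simp add: a_def K_def indicator_def sum.If_cases Int_def)
  have "card K \<le> card {1..n}" by (rule card_mono) (auto simp: K_def)
  then have "card K \<le> n" by simp
  moreover have "indicator (\<Union>i\<in>{1..n}. A i) x = (if card K = 0 then 0 else 1 :: real)"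
    by (auto simp: K_def indicator_def)
  ultimately show ?thesis
    unfolding singles pairs triples
    using counting_bound[OF count _ assms
            second_symmetric_sum_idempotent[of a n, OF idem]
            third_symmetric_sum_idempotent[of a n, OF idem]]
    by simp
qed

lemma has_bochner_integral_bonferroni3:
  assumes "has_bochner_integral M f1 s1" "has_bochner_integral M f2 s2"
    "has_bochner_integral M f3 s3"
  shows "has_bochner_integral M (\<lambda>x. bonferroni3 n (f1 x) (f2 x) (f3 x)) (bonferroni3 n s1 s2 s3)"
  unfolding bonferroni3_def
  using assms by (intro has_bochner_integral_mult_right has_bochner_integral_add
                        has_bochner_integral_diff) auto

theorem corollary4:
  fixes M :: "'a measure" and A :: "nat \<Rightarrow> 'a set" and n :: nat
  assumes "prob_space M"
    and "n \<ge> 3"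
    and "\<And>i. i \<in> {1..n} \<Longrightarrow> A i \<in> sets M"
  shows "measure M (\<Union>i\<in>{1..n}. A i) \<ge>
    (1 / (real n - 2)) *
      ((\<Sum>i\<in>{1..n}. measure M (A i))
       - ((2 * real n - 3) / real (n choose 2)) *
           (\<Sum>(i, j)\<in>{(i, j). 1 \<le> i \<and> i < j \<and> j \<le> n}. measure M (A i \<inter> A j))
       + (3 / real (n choose 2)) *
           (\<Sum>(i, j, k)\<in>{(i, j, k). 1 \<le> i \<and> i < j \<and> j < k \<and> k \<le> n}.
              measure M (A i \<inter> A j \<inter> A k)))"
proof -
  interpret prob_space M by fact
  have event_integral: "has_bochner_integral M (indicator B) (measure M B)" if "B \<in> sets M" for B
    using that by (simp add: has_bochner_integral_real_indicator less_top[symmetric])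
  define U where "U = (\<Union>i\<in>{1..n}. A i)"
  have "U \<in> sets M" using assms(3) by (auto simp: U_def)
  have "has_bochner_integral M
      (\<lambda>x. bonferroni3 n (\<Sum>i\<in>{1..n}. indicator (A i) x)
              (\<Sum>(i, j)\<in>increasing_pairs n. indicator (A i \<inter> A j) x)
              (\<Sum>(i, j, k)\<in>increasing_triples n. indicator (A i \<inter> A j \<inter> A k) x))
      (bonferroni3 n (\<Sum>i\<in>{1..n}. measure M (A i))
              (\<Sum>(i, j)\<in>increasing_pairs n. measure M (A i \<inter> A j))
              (\<Sum>(i, j, k)\<in>increasing_triples n. measure M (A i \<inter> A j \<inter> A k)))"
    (is "has_bochner_integral M ?F ?R")
    using assms(3)
    by (intro has_bochner_integral_bonferroni3 has_bochner_integral_sum)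
       (auto simp: increasing_pairs_def increasing_triples_def split: prod.splits
             intro!: event_integral)
  then have "?R = integral\<^sup>L M ?F"
    by (simp add: has_bochner_integral_integral_eq)
  also have "\<dots> \<le> integral\<^sup>L M (indicator U)"
    using \<open>U \<in> sets M\<close> indicator_bonferroni_bound[OF assms(2), of A]
    by (intro integral_mono') (auto simp: U_def less_top[symmetric])
  also have "\<dots> = measure M U"
    using \<open>U \<in> sets M\<close> by simp
  finally show ?thesis
    unfolding U_def bonferroni3_def increasing_pairs_def increasing_triples_def .
qed

end
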